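(* Let $G$ be an arbitrary graph and let $H$ be an odd cycle. Then $AT(G+_S H)=3$.
   Context: For an orientation $D$, a subdigraph is Eulerian if every vertex has equal in- and outdegree in it; $D$ is an AT-orientation if the numbers of Eulerian subgraphs with an even and with an odd number of arcs differ; $AT(G)$ is the smallest $k$ such that $G$ has an AT-orientation of maximum outdegree at most $k-1$. $S(G)$ is obtained from $G$ by subdividing each edge once, with vertex set identified with $V(G)\cup E(G)$. $G+_S H$ has vertex set $(V(G)\cup E(G))\times V(H)$, with $(u_1,u_2)\sim(v_1,v_2)$ iff [$u_1=v_1\in V(G)$ and $u_2v_2\in E(H)$] or [$u_2=v_2$ and $u_1v_1\in E(S(G))$]. *)

theory Defs
  imports Main
begin

definition graph :: "'a set \<Rightarrow> 'a set set \<Rightarrow> bool" where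
  "graph V E \<longleftrightarrow> finite V \<and> (\<forall>e\<in>E. \<exists>u v. e = {u, v} \<and> u \<in> V \<and> v \<in> V \<and> u \<noteq> v)"

definition odd_cycle :: "'b set \<Rightarrow> 'b set set \<Rightarrow> bool" where
  "odd_cycle V E \<longleftrightarrow> (\<exists>(n::nat) f. n \<ge> 3 \<and> odd n \<and> bij_betw f {0..<n} V \<and>
      E = {{f i, f ((i + 1) mod n)} | i. i < n})"

definition is_orientation :: "'a set set \<Rightarrow> ('a \<times> 'a) set \<Rightarrow> bool" where
  "is_orientation E D \<longleftrightarrow> (\<forall>(u, v)\<in>D. {u, v} \<in> E) \<and>
      (\<forall>u v. {u, v} \<in> E \<longrightarrow> ((u, v) \<in> D \<longleftrightarrow> (v, u) \<notin> D))"

definition outdeg :: "('a \<times> 'a) set \<Rightarrow> 'a \<Rightarrow> nat" where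
  "outdeg A v = card {w. (v, w) \<in> A}"

definition indeg :: "('a \<times> 'a) set \<Rightarrow> 'a \<Rightarrow> nat" where
  "indeg A v = card {w. (w, v) \<in> A}"

definition eulerian_subgraphs :: "('a \<times> 'a) set \<Rightarrow> ('a \<times> 'a) set set" where
  "eulerian_subgraphs D = {A. A \<subseteq> D \<and> (\<forall>v. indeg A v = outdeg A v)}"

definition AT_orientation :: "('a \<times> 'a) set \<Rightarrow> bool" where
  "AT_orientation D \<longleftrightarrow>
     card {A \<in> eulerian_subgraphs D. even (card A)} \<noteq> card {A \<in> eulerian_subgraphs D. odd (card A)}"

definition AT :: "'a set \<Rightarrow> 'a set set \<Rightarrow> nat" where
  "AT V E = (LEAST k. \<exists>D. is_orientation E D \<and> AT_orientation D \<and> (\<forall>v\<in>V. outdeg D v + 1 \<le> k))"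

definition subdiv_V :: "'a set \<Rightarrow> 'a set set \<Rightarrow> ('a + 'a set) set" where
  "subdiv_V V E = Inl ` V \<union> Inr ` E"

definition subdiv_E :: "'a set set \<Rightarrow> ('a + 'a set) set set" where
  "subdiv_E E = {{Inl u, Inr e} | u e. e \<in> E \<and> u \<in> e}"

definition sprod_V :: "'a set \<Rightarrow> 'a set set \<Rightarrow> 'b set \<Rightarrow> (('a + 'a set) \<times> 'b) set" where
  "sprod_V V E VH = subdiv_V V E \<times> VH"

definition sprod_E :: "'a set \<Rightarrow> 'a set set \<Rightarrow> 'b set \<Rightarrow> 'b set set \<Rightarrow> (('a + 'a set) \<times> 'b) set set" where
  "sprod_E V E VH EH =
     {{(u1, u2), (v1, v2)} | u1 u2 v1 v2.
        u1 \<in> subdiv_V V E \<and> v1 \<in> subdiv_V V E \<and> u2 \<in> VH \<and> v2 \<in> VH \<and>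
        ((u1 = v1 \<and> u1 \<in> Inl ` V \<and> {u2, v2} \<in> EH) \<or>
         (u2 = v2 \<and> {u1, v1} \<in> subdiv_E E))}"

end

theory Submission
  imports Defs
begin

text \<open>
  Upper bound: give the subdivision vertices rank 0 and the vertex (v, h) rank 1 + g h for an
  injective g on V(H), and orient every edge of G +_S H towards the larger rank. This orientation
  is acyclic, so the empty set is its only Eulerian subgraph and it is an AT-orientation; a
  subdivision vertex has only its two ends as out-neighbours, and (v, h) only its two neighbours
  in the copy {v} \<times> H.

  Lower bound: in an orientation of maximum outdegree at most 1, every copy {v} \<times> H of the odd
  cycle H becomes a directed cycle C whose vertices have no other out-arcs. An Eulerian subgraph
  entering C must follow it all the way round, so it contains C or avoids it, and A \<mapsto> A \<triangle> C
  pairs the Eulerian subgraphs of even size with those of odd size.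
\<close>

section \<open>Eulerian subdigraphs\<close>

definition balanced :: "('a \<times> 'a) set \<Rightarrow> bool" where
  "balanced A \<longleftrightarrow> (\<forall>v. indeg A v = outdeg A v)"

lemma eulerian_subgraphs_iff: "A \<in> eulerian_subgraphs D \<longleftrightarrow> A \<subseteq> D \<and> balanced A"
  unfolding eulerian_subgraphs_def balanced_def by simp

lemma finite_in_neighbours: "finite A \<Longrightarrow> finite {w. (w, v) \<in> A}"
  by (rule finite_subset[of _ "fst ` A"]) force+

lemma finite_out_neighbours: "finite A \<Longrightarrow> finite {w. (v, w) \<in> A}"
  by (rule finite_subset[of _ "snd ` A"]) force+

lemma
  assumes "finite A" "finite C" "A \<inter> C = {}"
  shows indeg_Un_disjoint: "indeg (A \<union> C) v = indeg A v + indeg C v"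
    and outdeg_Un_disjoint: "outdeg (A \<union> C) v = outdeg A v + outdeg C v"
proof -
  have "{w. (w, v) \<in> A \<union> C} = {w. (w, v) \<in> A} \<union> {w. (w, v) \<in> C}"
       "{w. (v, w) \<in> A \<union> C} = {w. (v, w) \<in> A} \<union> {w. (v, w) \<in> C}" by blast+
  then show "indeg (A \<union> C) v = indeg A v + indeg C v"
    and "outdeg (A \<union> C) v = outdeg A v + outdeg C v"
    unfolding indeg_def outdeg_def using assms
    by (simp_all add: card_Un_disjoint finite_in_neighbours finite_out_neighbours disjoint_iff)
qed

lemma balanced_Un:
  "finite A \<Longrightarrow> finite C \<Longrightarrow> A \<inter> C = {} \<Longrightarrow> balanced A \<Longrightarrow> balanced C \<Longrightarrow> balanced (A \<union> C)"
  by (simp add: balanced_def indeg_Un_disjoint outdeg_Un_disjoint)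

lemma balanced_Diff:
  assumes "finite A" "C \<subseteq> A" "balanced A" "balanced C"
  shows "balanced (A - C)"
proof -
  have "finite C" "finite (A - C)" using assms(1,2) finite_subset by auto
  moreover have "A = (A - C) \<union> C" using assms(2) by blast
  ultimately have "indeg A v = indeg (A - C) v + indeg C v"
    "outdeg A v = outdeg (A - C) v + outdeg C v" for v
    using indeg_Un_disjoint[of "A - C" C v] outdeg_Un_disjoint[of "A - C" C v] by auto
  then show ?thesis using assms(3,4) unfolding balanced_def by simp
qed

lemma balanced_out_arc:
  assumes "finite A" "balanced A" "(u, v) \<in> A"
  obtains w where "(v, w) \<in> A"
proof -
  have "indeg A v \<noteq> 0"
    using assms(1,3) finite_in_neighbours[of A v] unfolding indeg_def by auto
  then have "outdeg A v \<noteq> 0" using assms(2) unfolding balanced_def by simp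
  then show ?thesis using that unfolding outdeg_def by fastforce
qed

lemma outdeg_le_1_unique:
  assumes "finite D" "outdeg D v \<le> 1" "(v, a) \<in> D" "(v, b) \<in> D"
  shows "a = b"
  using assms finite_out_neighbours[of D v] unfolding outdeg_def
  by (auto simp: card_le_Suc0_iff_eq)

lemma outdeg_le_card_image:
  assumes "finite N" "{w. (x, w) \<in> D} \<subseteq> f ` N"
  shows "outdeg D x \<le> card N"
proof -
  have "outdeg D x \<le> card (f ` N)"
    unfolding outdeg_def using assms by (intro card_mono) simp_all
  also have "\<dots> \<le> card N" using assms(1) by (rule card_image_le)
  finally show ?thesis .
qed

lemma not_AT_orientation_if_odd_switch:
  assumes "finite D" "C \<subseteq> D" "balanced C" "odd (card C)"
    and contains_or_avoids: "\<And>A. A \<in> eulerian_subgraphs D \<Longrightarrow> C \<subseteq> A \<or> A \<inter> C = {}"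
  shows "\<not> AT_orientation D"
proof -
  define switch where "switch A = (A - C) \<union> (C - A)" for A
  have finC: "finite C" using assms(1,2) finite_subset by blast
  have switch_switch: "switch (switch A) = A" for A unfolding switch_def by blast
  have "switch A \<in> eulerian_subgraphs D \<and> (odd (card (switch A)) \<longleftrightarrow> even (card A))"
    if A: "A \<in> eulerian_subgraphs D" for A
  proof -
    have AD: "A \<subseteq> D" and bal: "balanced A" using A by (auto simp: eulerian_subgraphs_iff)
    have finA: "finite A" using AD assms(1) finite_subset by blast
    from contains_or_avoids[OF A] show ?thesis
    proof
      assume "C \<subseteq> A"
      then have "switch A = A - C" "card A = card (A - C) + card C"
        using finA finite_subset[OF \<open>C \<subseteq> A\<close> finA]
        by (auto simp: switch_def card_Diff_subset card_mono)
      then show ?thesis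
        using \<open>C \<subseteq> A\<close> AD balanced_Diff[OF finA _ bal assms(3)] assms(4)
        by (auto simp: eulerian_subgraphs_iff)
    next
      assume "A \<inter> C = {}"
      then have "switch A = A \<union> C" "card (A \<union> C) = card A + card C"
        using finA finC by (auto simp: switch_def card_Un_disjoint)
      then show ?thesis
        using \<open>A \<inter> C = {}\<close> AD assms(2,4) balanced_Un[OF finA finC _ bal assms(3)]
        by (auto simp: eulerian_subgraphs_iff)
    qed
  qed
  then have "bij_betw switch {A \<in> eulerian_subgraphs D. even (card A)}
      {A \<in> eulerian_subgraphs D. odd (card A)}"
    by (intro bij_betw_byWitness[where f' = switch]) (auto simp: switch_switch)
  then show ?thesis unfolding AT_orientation_def by (simp add: bij_betw_same_card)
qed

lemma AT_orientation_if_ranked: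
  fixes r :: "'a \<Rightarrow> 'b::linorder"
  assumes "finite D" and ranked: "\<And>a b. (a, b) \<in> D \<Longrightarrow> r a < r b"
  shows "AT_orientation D"
proof -
  have "A = {}" if A: "A \<in> eulerian_subgraphs D" for A
  proof (rule ccontr)
    assume "A \<noteq> {}"
    have AD: "A \<subseteq> D" and bal: "balanced A" using A by (auto simp: eulerian_subgraphs_iff)
    have finA: "finite A" using AD assms(1) finite_subset by blast
    \<comment> \<open>an arc of A whose head has maximal rank cannot be continued inside A\<close>
    define m where "m = Max ((\<lambda>e. r (snd e)) ` A)"
    obtain a b where ab: "(a, b) \<in> A" "r b = m"
      using Max_in[of "(\<lambda>e. r (snd e)) ` A"] finA \<open>A \<noteq> {}\<close> unfolding m_def by fastforce
    obtain c where bc: "(b, c) \<in> A" using balanced_out_arc[OF finA bal ab(1)] .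
    have "r c \<le> m" unfolding m_def using bc finA by (force intro: Max_ge)
    moreover have "r b < r c" using bc AD ranked by blast
    ultimately show False using ab(2) by simp
  qed
  moreover have "{} \<in> eulerian_subgraphs D"
    by (simp add: eulerian_subgraphs_iff balanced_def indeg_def outdeg_def)
  ultimately have "eulerian_subgraphs D = {{}}" by blast
  then show ?thesis unfolding AT_orientation_def by (simp add: Collect_conv_if)
qed

section \<open>Directed cycles\<close>

definition cycle_arcs :: "(nat \<Rightarrow> 'a) \<Rightarrow> nat \<Rightarrow> ('a \<times> 'a) set" where
  "cycle_arcs p n = (\<lambda>i. (p i, p (Suc i mod n))) ` {0..<n}"

lemma cyclic_propagation:
  fixes n :: nat
  assumes "j < n" "P j" and step: "\<And>i. i < n \<Longrightarrow> P i \<Longrightarrow> P (Suc i mod n)" and "i < n"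
  shows "P i"
proof -
  have "P ((j + k) mod n)" for k
  proof (induction k)
    case 0
    then show ?case using assms(1,2) by simp
  next
    case (Suc k)
    then show ?case using step[of "(j + k) mod n"] assms(1) by (simp add: mod_Suc_eq)
  qed
  from this[of "n - j + i"] show ?thesis using assms(1,4) by simp
qed

lemma Suc_mod_eq_iff:
  fixes i j n :: nat
  assumes "i < n" "j < n"
  shows "Suc j mod n = i \<longleftrightarrow> j = (i + n - 1) mod n"
  using assms by (cases "Suc j < n"; cases i) (auto simp: mod_if)

lemma cycle_arcs_subset_iff:
  "cycle_arcs p n \<subseteq> A \<longleftrightarrow> (\<forall>i<n. (p i, p (Suc i mod n)) \<in> A)"
  unfolding cycle_arcs_def by auto

lemma cycle_arcs_disjoint_iff:
  "A \<inter> cycle_arcs p n = {} \<longleftrightarrow> (\<forall>i<n. (p i, p (Suc i mod n)) \<notin> A)"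
  unfolding cycle_arcs_def by auto

lemma card_cycle_arcs: "inj_on p {0..<n} \<Longrightarrow> card (cycle_arcs p n) = n"
  unfolding cycle_arcs_def by (subst card_image) (auto simp: inj_on_def)

lemma balanced_cycle_arcs:
  assumes inj: "inj_on p {0..<n}"
  shows "balanced (cycle_arcs p n)"
  unfolding balanced_def
proof
  fix v
  show "indeg (cycle_arcs p n) v = outdeg (cycle_arcs p n) v"
  proof (cases "v \<in> p ` {0..<n}")
    case True
    then obtain i where i: "i < n" "v = p i" by auto
    have "{w. (v, w) \<in> cycle_arcs p n} = {p (Suc i mod n)}"
      using i inj unfolding cycle_arcs_def inj_on_def by auto
    moreover have "{w. (w, v) \<in> cycle_arcs p n} = p ` {j. j < n \<and> Suc j mod n = i}"
      using i inj unfolding cycle_arcs_def inj_on_def by auto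
    moreover have "{j. j < n \<and> Suc j mod n = i} = {(i + n - 1) mod n}"
      using Suc_mod_eq_iff[OF i(1)] i(1) by auto
    ultimately show ?thesis unfolding indeg_def outdeg_def by simp
  next
    case False
    then have "{w. (v, w) \<in> cycle_arcs p n} = {}" "{w. (w, v) \<in> cycle_arcs p n} = {}"
      unfolding cycle_arcs_def by auto
    then show ?thesis unfolding indeg_def outdeg_def by simp
  qed
qed

lemma
  fixes p :: "nat \<Rightarrow> 'a" and n :: nat
  defines "q \<equiv> \<lambda>i. p ((n - i) mod n)"
  shows converse_cycle_arcs: "(cycle_arcs p n)\<inverse> = cycle_arcs q n"
    and image_reversed_cycle: "q ` {0..<n} = p ` {0..<n}"
    and inj_on_reversed_cycle: "inj_on p {0..<n} \<Longrightarrow> inj_on q {0..<n}"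
proof -
  have rev_rev: "(n - (n - j) mod n) mod n = j" if "j < n" for j
    using that by (cases j) (auto simp: mod_if)
  have rev_Suc: "Suc ((n - Suc i mod n) mod n) mod n = (n - i) mod n" if "i < n" for i
    using that by (cases "Suc i < n") (auto simp: mod_if)
  have rev_Suc_rev: "(n - Suc ((n - Suc j mod n) mod n) mod n) mod n = j" if "j < n" for j
    using that by (cases "Suc j < n"; cases "Suc (Suc j) < n") (auto simp: mod_if)
  have rev_inj: "i = j" if "i < n" "j < n" "(n - i) mod n = (n - j) mod n" for i j
    using that by (auto simp: mod_if split: if_splits)
  show "(cycle_arcs p n)\<inverse> = cycle_arcs q n"
  proof (intro set_eqI iffI)
    fix x assume "x \<in> (cycle_arcs p n)\<inverse>"
    then obtain j where j: "j < n" "x = (p (Suc j mod n), p j)" unfolding cycle_arcs_def by auto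
    let ?i = "(n - Suc j mod n) mod n"
    have "x = (q ?i, q (Suc ?i mod n))"
      unfolding q_def using j rev_rev[of "Suc j mod n"] rev_Suc_rev[of j] by simp
    moreover have "?i < n" using j(1) by simp
    ultimately show "x \<in> cycle_arcs q n" unfolding cycle_arcs_def by auto
  next
    fix x assume "x \<in> cycle_arcs q n"
    then obtain i where i: "i < n" "x = (q i, q (Suc i mod n))" unfolding cycle_arcs_def by auto
    let ?j = "(n - Suc i mod n) mod n"
    have "x = (p (Suc ?j mod n), p ?j)"
      using i rev_Suc[of i] by (simp add: q_def)
    moreover have "?j < n" using i(1) by simp
    ultimately show "x \<in> (cycle_arcs p n)\<inverse>" unfolding cycle_arcs_def by auto
  qed
  show "q ` {0..<n} = p ` {0..<n}"
  proof
    show "q ` {0..<n} \<subseteq> p ` {0..<n}" unfolding q_def by auto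
    show "p ` {0..<n} \<subseteq> q ` {0..<n}"
    proof
      fix y assume "y \<in> p ` {0..<n}"
      then obtain j where "j < n" "y = p j" by auto
      then have "y = q ((n - j) mod n)" "(n - j) mod n < n" unfolding q_def using rev_rev by auto
      then show "y \<in> q ` {0..<n}" by auto
    qed
  qed
  show "inj_on q {0..<n}" if inj: "inj_on p {0..<n}"
  proof (rule inj_onI)
    fix i j assume "i \<in> {0..<n}" "j \<in> {0..<n}" "q i = q j"
    have "p ((n - i) mod n) = p ((n - j) mod n)" using \<open>q i = q j\<close> by (simp add: q_def)
    moreover have "(n - i) mod n \<in> {0..<n}" "(n - j) mod n \<in> {0..<n}"
      using \<open>i \<in> {0..<n}\<close> by simp_all
    ultimately have "(n - i) mod n = (n - j) mod n" by (rule inj_onD[OF inj])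
    then show "i = j" using \<open>i \<in> {0..<n}\<close> \<open>j \<in> {0..<n}\<close> by (meson atLeastLessThan_iff rev_inj)
  qed
qed

lemma eulerian_subgraph_contains_or_avoids_cycle:
  assumes "finite D" "cycle_arcs p n \<subseteq> D" "\<forall>v\<in>p ` {0..<n}. outdeg D v \<le> 1"
    and A: "A \<in> eulerian_subgraphs D"
  shows "cycle_arcs p n \<subseteq> A \<or> A \<inter> cycle_arcs p n = {}"
proof -
  have AD: "A \<subseteq> D" and bal: "balanced A" using A by (auto simp: eulerian_subgraphs_iff)
  have finA: "finite A" using AD assms(1) finite_subset by blast
  define in_A where "in_A i \<longleftrightarrow> (p i, p (Suc i mod n)) \<in> A" for i
  \<comment> \<open>the arc of A leaving the head of a cycle arc must be the next cycle arc\<close>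
  have next_in_A: "in_A (Suc i mod n)" if i: "i < n" and arc: "in_A i" for i
  proof -
    let ?j = "Suc i mod n"
    have j: "?j < n" using i by simp
    obtain w where w: "(p ?j, w) \<in> A"
      using balanced_out_arc[OF finA bal] arc unfolding in_A_def by blast
    have "(p ?j, p (Suc ?j mod n)) \<in> D" using assms(2) j by (simp add: cycle_arcs_subset_iff)
    moreover have "outdeg D (p ?j) \<le> 1" using assms(3) j by simp
    moreover have "(p ?j, w) \<in> D" using w AD by blast
    ultimately have "w = p (Suc ?j mod n)" using outdeg_le_1_unique[OF assms(1)] by blast
    then show ?thesis using w unfolding in_A_def by simp
  qed
  show ?thesis
  proof (cases "\<exists>j<n. in_A j")
    case True
    then obtain j where "j < n" "in_A j" by blast
    then have "in_A i" if "i < n" for i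
      using cyclic_propagation[of j n in_A, OF _ _ next_in_A that] by blast
    then show ?thesis unfolding cycle_arcs_subset_iff in_A_def by blast
  next
    case False
    then show ?thesis unfolding cycle_arcs_disjoint_iff in_A_def by blast
  qed
qed

lemma odd_directed_cycle_not_AT_orientation:
  assumes "finite D" "odd n" "inj_on p {0..<n}" "cycle_arcs p n \<subseteq> D"
    and "\<forall>v\<in>p ` {0..<n}. outdeg D v \<le> 1"
  shows "\<not> AT_orientation D"
  using assms
  by (intro not_AT_orientation_if_odd_switch[of D "cycle_arcs p n"])
    (auto simp: balanced_cycle_arcs card_cycle_arcs eulerian_subgraph_contains_or_avoids_cycle)

lemma cycle_directed_if_outdeg_le_1:
  assumes orient: "is_orientation E D" and "finite D" "n \<ge> 3" "inj_on p {0..<n}"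
    and edges: "\<And>i. i < n \<Longrightarrow> {p i, p (Suc i mod n)} \<in> E"
    and outdeg: "\<forall>v\<in>p ` {0..<n}. outdeg D v \<le> 1"
  shows "cycle_arcs p n \<subseteq> D \<or> (cycle_arcs p n)\<inverse> \<subseteq> D"
proof -
  define forward where "forward i \<longleftrightarrow> (p i, p (Suc i mod n)) \<in> D" for i
  have backward: "(p (Suc i mod n), p i) \<in> D" if "i < n" "\<not> forward i" for i
    using orient edges[OF that(1)] that(2) unfolding is_orientation_def forward_def by blast
  \<comment> \<open>a backward arc uses up the single out-arc of its tail, so the next arc is backward too\<close>
  have backward_step: "\<not> forward (Suc i mod n)" if "i < n" "\<not> forward i" for i
  proof
    let ?j = "Suc i mod n"
    assume "forward ?j"
    then have "p i = p (Suc ?j mod n)"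
      using outdeg_le_1_unique[OF assms(2)] outdeg backward[OF that] that(1)
      unfolding forward_def by fastforce
    then have "i = Suc ?j mod n"
      using assms(4) that(1) by (auto dest: inj_onD)
    then show False using that(1) assms(3) by (auto simp: mod_if split: if_splits)
  qed
  show ?thesis
  proof (cases "\<exists>j<n. \<not> forward j")
    case True
    then obtain j where "j < n" "\<not> forward j" by blast
    then have "\<not> forward i" if "i < n" for i
      using cyclic_propagation[of j n "\<lambda>i. \<not> forward i", OF _ _ backward_step that] by blast
    then have "(cycle_arcs p n)\<inverse> \<subseteq> D" using backward by (auto simp: cycle_arcs_def)
    then show ?thesis by blast
  next
    case False
    then show ?thesis unfolding cycle_arcs_subset_iff forward_def by blast
  qed
qed

lemma AT_orientation_odd_cycle_outdeg_ge_2: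
  assumes "is_orientation E D" "finite D" "AT_orientation D" "odd n" "n \<ge> 3" "inj_on p {0..<n}"
    and "\<And>i. i < n \<Longrightarrow> {p i, p (Suc i mod n)} \<in> E"
  shows "\<exists>v\<in>p ` {0..<n}. 2 \<le> outdeg D v"
proof (rule ccontr)
  assume "\<not> ?thesis"
  then have outdeg: "\<forall>v\<in>p ` {0..<n}. outdeg D v \<le> 1" by auto
  from cycle_directed_if_outdeg_le_1[OF assms(1,2,5,6,7) outdeg] show False
  proof
    assume "cycle_arcs p n \<subseteq> D"
    then show False
      using odd_directed_cycle_not_AT_orientation assms(2,3,4,6) outdeg by blast
  next
    assume "(cycle_arcs p n)\<inverse> \<subseteq> D"
    then show False
      using odd_directed_cycle_not_AT_orientation[of D n "\<lambda>i. p ((n - i) mod n)"]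
        assms(2,3,4,6) outdeg
      by (simp add: converse_cycle_arcs image_reversed_cycle inj_on_reversed_cycle)
  qed
qed

section \<open>Orientations of graphs and odd cycles\<close>

lemma graph_edge_card:
  assumes "graph V E" "e \<in> E"
  shows "card e = 2"
proof -
  obtain u v where "e = {u, v}" "u \<noteq> v" using assms unfolding graph_def by blast
  then show ?thesis by simp
qed

lemma graph_neighbours_subset:
  assumes "graph V E"
  shows "{w. {v, w} \<in> E} \<subseteq> V"
proof
  fix w assume "w \<in> {w. {v, w} \<in> E}"
  then obtain a b where "{v, w} = {a, b}" "a \<in> V" "b \<in> V"
    using assms unfolding graph_def by blast
  then show "w \<in> V" by (auto simp: doubleton_eq_iff)
qed

lemma finite_orientation:
  assumes "is_orientation E D" "finite (\<Union>E)"
  shows "finite D"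
proof -
  have "(a, b) \<in> \<Union>E \<times> \<Union>E" if "(a, b) \<in> D" for a b
    using assms(1) that unfolding is_orientation_def by blast
  then have "D \<subseteq> \<Union>E \<times> \<Union>E" by auto
  then show ?thesis using assms(2) finite_subset by blast
qed

lemma orientation_by_rank:
  assumes "\<And>a b. {a, b} \<in> E \<Longrightarrow> r a \<noteq> r b"
  shows "is_orientation E {(a, b). {a, b} \<in> E \<and> r a < (r b :: 'b::linorder)}"
  unfolding is_orientation_def
proof (intro conjI allI impI)
  fix a b assume "{a, b} \<in> E"
  moreover have "{b, a} = {a, b}" by blast
  ultimately show "(a, b) \<in> {(a, b). {a, b} \<in> E \<and> r a < r b} \<longleftrightarrow>
      (b, a) \<notin> {(a, b). {a, b} \<in> E \<and> r a < r b}"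
    using assms[of a b] by auto
qed auto

lemma odd_cycleE:
  assumes "odd_cycle VH EH"
  obtains n f where "n \<ge> 3" "odd n" "bij_betw f {0..<n} VH"
    "EH = {{f i, f (Suc i mod n)} | i. i < n}"
  using assms unfolding odd_cycle_def by auto

lemma odd_cycle_graph:
  assumes "odd_cycle VH EH"
  shows "graph VH EH"
proof -
  obtain n f where n: "n \<ge> 3" and bij: "bij_betw f {0..<n} VH"
    and EH: "EH = {{f i, f (Suc i mod n)} | i. i < n}"
    using assms by (rule odd_cycleE)
  have inj: "inj_on f {0..<n}" using bij by (rule bij_betw_imp_inj_on)
  have fVH: "f i \<in> VH" if "i < n" for i
    using bij that by (auto simp: bij_betw_def)
  have "\<exists>u v. e = {u, v} \<and> u \<in> VH \<and> v \<in> VH \<and> u \<noteq> v" if "e \<in> EH" for e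
  proof -
    obtain i where i: "i < n" and e: "e = {f i, f (Suc i mod n)}" using \<open>e \<in> EH\<close> EH by blast
    have "Suc i mod n < n" using i by simp
    moreover have "i \<noteq> Suc i mod n" using i n by (auto simp: mod_if)
    ultimately have "f i \<noteq> f (Suc i mod n)" using i inj_onD[OF inj] by fastforce
    then show ?thesis using e i fVH \<open>Suc i mod n < n\<close> by blast
  qed
  moreover have "finite VH" using bij bij_betw_finite by blast
  ultimately show ?thesis unfolding graph_def by blast
qed

lemma cycle_degree_le_2:
  assumes inj: "inj_on f {0..<n}" and EH: "EH = {{f i, f (Suc i mod n)} | i. i < n}"
  shows "card {h'. {h, h'} \<in> EH} \<le> 2"
proof (cases "\<exists>i<n. h = f i")
  case True
  then obtain i where i: "i < n" "h = f i" by blast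
  have "{h'. {h, h'} \<in> EH} \<subseteq> {f (Suc i mod n), f ((i + n - 1) mod n)}"
  proof
    fix h' assume "h' \<in> {h'. {h, h'} \<in> EH}"
    then obtain j where j: "j < n" "{h, h'} = {f j, f (Suc j mod n)}" unfolding EH by blast
    then consider "h = f j" "h' = f (Suc j mod n)" | "h = f (Suc j mod n)" "h' = f j"
      by (auto simp: doubleton_eq_iff)
    then show "h' \<in> {f (Suc i mod n), f ((i + n - 1) mod n)}"
    proof cases
      case 1
      then have "i = j" using inj_onD[OF inj, of i j] i j(1) by simp
      then show ?thesis using 1 by simp
    next
      case 2
      then have "i = Suc j mod n" using inj_onD[OF inj, of i "Suc j mod n"] i j(1) by simp
      then show ?thesis using 2 Suc_mod_eq_iff[OF i(1) j(1)] by simp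
    qed
  qed
  then have "card {h'. {h, h'} \<in> EH} \<le> card {f (Suc i mod n), f ((i + n - 1) mod n)}"
    by (rule card_mono[rotated]) simp
  also have "\<dots> \<le> 2" by (simp add: card_insert_if)
  finally show ?thesis .
next
  case False
  have "{h, h'} \<notin> EH" for h'
  proof
    assume "{h, h'} \<in> EH"
    then obtain j where j: "j < n" "{h, h'} = {f j, f (Suc j mod n)}" unfolding EH by blast
    then have "h = f j \<or> h = f (Suc j mod n)" by (auto simp: doubleton_eq_iff)
    moreover have "Suc j mod n < n" using j(1) by simp
    ultimately show False using False j(1) by blast
  qed
  then show ?thesis by simp
qed

section \<open>The product G +_S H\<close>

lemma sprod_E_memD:
  assumes "{a, b} \<in> sprod_E V E VH EH"
  shows "a \<in> sprod_V V E VH" "b \<in> sprod_V V E VH"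
    "fst a = fst b \<and> fst a \<in> Inl ` V \<and> {snd a, snd b} \<in> EH \<or>
     snd a = snd b \<and> {fst a, fst b} \<in> subdiv_E E"
proof -
  obtain u1 u2 v1 v2 where eq: "{a, b} = {(u1, u2), (v1, v2)}" and
    edge: "u1 \<in> subdiv_V V E" "v1 \<in> subdiv_V V E" "u2 \<in> VH" "v2 \<in> VH"
      "u1 = v1 \<and> u1 \<in> Inl ` V \<and> {u2, v2} \<in> EH \<or> u2 = v2 \<and> {u1, v1} \<in> subdiv_E E"
    using assms unfolding sprod_E_def by blast
  from eq have "a = (u1, u2) \<and> b = (v1, v2) \<or> a = (v1, v2) \<and> b = (u1, u2)"
    by (simp add: doubleton_eq_iff)
  then show "a \<in> sprod_V V E VH" "b \<in> sprod_V V E VH"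
    "fst a = fst b \<and> fst a \<in> Inl ` V \<and> {snd a, snd b} \<in> EH \<or>
     snd a = snd b \<and> {fst a, fst b} \<in> subdiv_E E"
    using edge unfolding sprod_V_def by (auto simp: insert_commute)
qed

lemma sprod_E_layerI:
  "v \<in> V \<Longrightarrow> {h, h'} \<in> EH \<Longrightarrow> h \<in> VH \<Longrightarrow> h' \<in> VH \<Longrightarrow>
    {(Inl v, h), (Inl v, h')} \<in> sprod_E V E VH EH"
  unfolding sprod_E_def subdiv_V_def
  by (intro CollectI exI[of _ "Inl v"] exI[of _ h] exI[of _ "Inl v"] exI[of _ h']) auto

lemma sprod_E_Inl_Inl:
  assumes "{(Inl v, h), (Inl v', h')} \<in> sprod_E V E VH EH"
  shows "v' = v \<and> {h, h'} \<in> EH"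
  using sprod_E_memD(3)[OF assms] unfolding subdiv_E_def by (auto simp: doubleton_eq_iff)

lemma sprod_E_Inr_neighbour:
  assumes "{(Inr e, h), w} \<in> sprod_E V E VH EH"
  shows "\<exists>u\<in>e. w = (Inl u, h)"
  using sprod_E_memD(3)[OF assms] unfolding subdiv_E_def
  by (cases w) (auto simp: doubleton_eq_iff)

lemma Union_sprod_E_subset: "\<Union>(sprod_E V E VH EH) \<subseteq> sprod_V V E VH"
proof
  fix x assume "x \<in> \<Union>(sprod_E V E VH EH)"
  then obtain a b where "{a, b} \<in> sprod_E V E VH EH" "x \<in> {a, b}"
    unfolding sprod_E_def by blast
  then show "x \<in> sprod_V V E VH" using sprod_E_memD(1,2) by blast
qed

lemma finite_sprod_V:
  assumes "graph V E" "finite VH"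
  shows "finite (sprod_V V E VH)"
proof -
  have "finite V" "E \<subseteq> Pow V" using assms(1) unfolding graph_def by auto
  then show ?thesis using assms(2) finite_subset unfolding sprod_V_def subdiv_V_def by blast
qed

lemma finite_sprod_orientation:
  assumes "graph V E" "finite VH" "is_orientation (sprod_E V E VH EH) D"
  shows "finite D"
  using assms(3) finite_subset[OF Union_sprod_E_subset finite_sprod_V[OF assms(1,2)]]
  by (rule finite_orientation)

fun sprod_rank :: "('b \<Rightarrow> nat) \<Rightarrow> ('a + 'a set) \<times> 'b \<Rightarrow> nat" where
  "sprod_rank g (Inl _, h) = Suc (g h)"
| "sprod_rank g (Inr _, _) = 0"

lemma sprod_rank_neq:
  assumes H: "graph VH EH" and g: "inj_on g VH" and ab: "{a, b} \<in> sprod_E V E VH EH"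
  shows "sprod_rank g a \<noteq> sprod_rank g b"
proof -
  obtain a1 h b1 h' where a: "a = (a1, h)" and b: "b = (b1, h')" by fastforce
  show ?thesis
  proof (cases a1)
    case (Inl v)
    show ?thesis
    proof (cases b1)
      case (Inl v')
      then have "{h, h'} \<in> EH" using sprod_E_Inl_Inl[of v h v' h'] ab a b \<open>a1 = Inl v\<close> by simp
      then have "h \<noteq> h'" "h \<in> VH" "h' \<in> VH"
        using H unfolding graph_def by (auto simp: doubleton_eq_iff)
      then have "g h \<noteq> g h'" by (rule inj_on_contraD[OF g])
      then show ?thesis using a b \<open>a1 = Inl v\<close> Inl by simp
    next
      case (Inr e')
      then show ?thesis using a b \<open>a1 = Inl v\<close> by simp
    qed
  next
    case (Inr e)
    then have "\<exists>u\<in>e. b = (Inl u, h)" using sprod_E_Inr_neighbour[of e h b] ab a by simp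
    then show ?thesis using a Inr by auto
  qed
qed

lemma outdeg_sprod_rank_orientation_le_2:
  fixes g :: "'b \<Rightarrow> nat"
  assumes G: "graph V E" and H: "graph VH EH" and deg: "\<And>h. card {h'. {h, h'} \<in> EH} \<le> 2"
    and x: "x \<in> sprod_V V E VH"
  defines "D \<equiv> {(a, b). {a, b} \<in> sprod_E V E VH EH \<and> sprod_rank g a < sprod_rank g b}"
  shows "outdeg D x \<le> 2"
proof -
  obtain a h where xah: "x = (a, h)" by fastforce
  show ?thesis
  proof (cases a)
    case (Inl v)
    \<comment> \<open>arcs at subdivision vertices all leave them, so (v, h) has out-arcs only inside {v} \<times> H\<close>
    have "{w. (x, w) \<in> D} \<subseteq> (\<lambda>h'. (Inl v, h')) ` {h'. {h, h'} \<in> EH}"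
    proof
      fix w assume "w \<in> {w. (x, w) \<in> D}"
      then have w: "{x, w} \<in> sprod_E V E VH EH" "sprod_rank g x < sprod_rank g w"
        unfolding D_def by auto
      obtain w1 h' where w1: "w = (w1, h')" by fastforce
      then obtain v' where v': "w1 = Inl v'" using w(2) by (cases w1) auto
      have "{(Inl v, h), (Inl v', h')} \<in> sprod_E V E VH EH" using w(1) xah Inl w1 v' by simp
      from sprod_E_Inl_Inl[OF this] show "w \<in> (\<lambda>h'. (Inl v, h')) ` {h'. {h, h'} \<in> EH}"
        using w1 v' by auto
    qed
    moreover have "finite {h'. {h, h'} \<in> EH}"
      using H graph_neighbours_subset[OF H] unfolding graph_def by (meson finite_subset)
    ultimately have "outdeg D x \<le> card {h'. {h, h'} \<in> EH}"
      by (intro outdeg_le_card_image)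
    then show ?thesis using deg[of h] by (rule le_trans)
  next
    case (Inr e)
    have "{w. (x, w) \<in> D} \<subseteq> (\<lambda>u. (Inl u, h)) ` e"
    proof
      fix w assume "w \<in> {w. (x, w) \<in> D}"
      then have "{(Inr e, h), w} \<in> sprod_E V E VH EH" unfolding D_def using xah Inr by simp
      then obtain u where "u \<in> e" "w = (Inl u, h)" by (blast dest: sprod_E_Inr_neighbour)
      then show "w \<in> (\<lambda>u. (Inl u, h)) ` e" by simp
    qed
    moreover have "e \<in> E" using x xah Inr unfolding sprod_V_def subdiv_V_def by auto
    then have "card e = 2" using G by (rule graph_edge_card[rotated])
    moreover from this have "finite e" by (intro card_ge_0_finite) simp
    ultimately show ?thesis using outdeg_le_card_image[of e x D] by simp
  qed
qed

lemma sprod_has_AT_orientation_outdeg_le_2: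
  assumes G: "graph V E" and H: "graph VH EH" and deg: "\<And>h. card {h'. {h, h'} \<in> EH} \<le> 2"
  obtains D where "is_orientation (sprod_E V E VH EH) D" "AT_orientation D"
    "\<forall>x\<in>sprod_V V E VH. outdeg D x \<le> 2"
proof -
  have finVH: "finite VH" using H unfolding graph_def by blast
  obtain g :: "'b \<Rightarrow> nat" where g: "inj_on g VH"
    using finite_imp_inj_to_nat_seg[OF finVH] by blast
  define D where "D = {(a, b). {a, b} \<in> sprod_E V E VH EH \<and> sprod_rank g a < sprod_rank g b}"
  have orient: "is_orientation (sprod_E V E VH EH) D"
    unfolding D_def using sprod_rank_neq[OF H g] by (rule orientation_by_rank)
  have "finite D" using G finVH orient by (rule finite_sprod_orientation)
  then have "AT_orientation D"
    by (rule AT_orientation_if_ranked[where r = "sprod_rank g"]) (simp add: D_def)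
  moreover have "\<forall>x\<in>sprod_V V E VH. outdeg D x \<le> 2"
    using outdeg_sprod_rank_orientation_le_2[OF G H deg] unfolding D_def by blast
  ultimately show ?thesis using orient that by blast
qed

lemma sprod_AT_orientation_outdeg_ge_2:
  assumes G: "graph V E" and v: "v \<in> V" and H: "odd_cycle VH EH"
    and orient: "is_orientation (sprod_E V E VH EH) D" and AT: "AT_orientation D"
  shows "\<exists>x\<in>sprod_V V E VH. 2 \<le> outdeg D x"
proof -
  obtain n f where n: "n \<ge> 3" "odd n" and bij: "bij_betw f {0..<n} VH"
    and EH: "EH = {{f i, f (Suc i mod n)} | i. i < n}"
    using H by (rule odd_cycleE)
  have fVH: "f i \<in> VH" if "i < n" for i using bij that by (auto simp: bij_betw_def)
  define p :: "nat \<Rightarrow> ('a + 'a set) \<times> 'b" where "p i = (Inl v, f i)" for i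
  have inj: "inj_on p {0..<n}"
  proof (rule inj_onI)
    fix i j assume "i \<in> {0..<n}" "j \<in> {0..<n}" "p i = p j"
    then show "i = j" using bij_betw_imp_inj_on[OF bij] unfolding p_def by (simp add: inj_on_eq_iff)
  qed
  have edges: "{p i, p (Suc i mod n)} \<in> sprod_E V E VH EH" if "i < n" for i
  proof -
    have edge: "{f i, f (Suc i mod n)} \<in> EH" using that unfolding EH by blast
    have "Suc i mod n < n" using that by simp
    then show ?thesis unfolding p_def by (intro sprod_E_layerI[OF v edge] fVH that)
  qed
  have "finite VH" using bij bij_betw_finite by blast
  with G orient have "finite D" by (intro finite_sprod_orientation)
  from AT_orientation_odd_cycle_outdeg_ge_2[where p = p, OF orient this AT n(2,1) inj edges]
  obtain x where x: "x \<in> p ` {0..<n}" "2 \<le> outdeg D x" by blast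
  have "p ` {0..<n} \<subseteq> sprod_V V E VH"
    unfolding p_def sprod_V_def subdiv_V_def using v fVH by auto
  then show ?thesis using x by blast
qed

theorem corollary3p2:
  fixes V :: "'a set" and E :: "'a set set" and VH :: "'b set" and EH :: "'b set set"
  assumes "graph V E" and "V \<noteq> {}" and "odd_cycle VH EH"
  shows "AT (sprod_V V E VH) (sprod_E V E VH EH) = 3"
proof -
  have H: "graph VH EH" using assms(3) by (rule odd_cycle_graph)
  obtain n f where bij: "bij_betw f {0..<n} VH" and EH: "EH = {{f i, f (Suc i mod n)} | i. i < n}"
    using assms(3) by (rule odd_cycleE)
  have "card {h'. {h, h'} \<in> EH} \<le> 2" for h
    using cycle_degree_le_2[OF bij_betw_imp_inj_on[OF bij] EH] .
  then obtain D where D: "is_orientation (sprod_E V E VH EH) D" "AT_orientation D"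
    "\<forall>x\<in>sprod_V V E VH. outdeg D x \<le> 2"
    using sprod_has_AT_orientation_outdeg_le_2[OF assms(1) H] by blast
  obtain v where "v \<in> V" using assms(2) by blast
  note outdeg_ge_2 = sprod_AT_orientation_outdeg_ge_2[OF assms(1) this assms(3)]
  show ?thesis unfolding AT_def
  proof (rule Least_equality)
    show "\<exists>D. is_orientation (sprod_E V E VH EH) D \<and> AT_orientation D \<and>
        (\<forall>x\<in>sprod_V V E VH. outdeg D x + 1 \<le> 3)"
      using D by auto
  next
    fix k assume "\<exists>D. is_orientation (sprod_E V E VH EH) D \<and> AT_orientation D \<and>
        (\<forall>x\<in>sprod_V V E VH. outdeg D x + 1 \<le> k)"
    then obtain D' where "is_orientation (sprod_E V E VH EH) D'" "AT_orientation D'"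
      and bound: "\<forall>x\<in>sprod_V V E VH. outdeg D' x + 1 \<le> k" by blast
    then obtain x where "x \<in> sprod_V V E VH" "2 \<le> outdeg D' x" using outdeg_ge_2 by blast
    then show "3 \<le> k" using bound by fastforce
  qed
qed

end
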